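(* Let $\Sigma=\Sigma_p\cup\Sigma_d$ be a finite propositional alphabet partitioned into parameter symbols $\Sigma_p$ and defined symbols $\Sigma_d$. For each $I\in 2^{\Sigma_p}$ let $\pi_I:L^d_p\to 2^{\Sigma_d}$ map $\mathcal{A}$ to $\mathcal{A}^I=\{a\in\Sigma_d\mid \psi_a^I=\mathbf{t}\text{ where }\mathcal{A}(a)=\overline{\psi_a}\}$. Then $L^d_p$ is a parametrisation of $\langle 2^{\Sigma_d},\subseteq\rangle$ through $(\pi_I)_{I\in 2^{\Sigma_p}}$.
   Context: $L_p$ is the set of equivalence classes $\overline\varphi$ (under logical equivalence) of propositional formulas over $\Sigma_p$, ordered by $\overline\varphi\leq\overline\psi$ iff $\varphi\models\psi$; it is a complete lattice. $L^d_p$ is the set of maps $\Sigma_d\to L_p$, ordered pointwise. A complete lattice $L$ is a parametrisation of a complete lattice $K$ through a family $(f_i:L\to K)_{i\in I}$ if each $f_i$ is a surjective lattice morphism (i.e. $f_i(\bigvee X)=\bigvee f_i(X)$ and $f_i(\bigwedge X)=\bigwedge f_i(X)$ for every $X\subseteq L$) and for all $x,y\in L$: $x\leq y$ iff $f_i(x)\leq f_i(y)$ for every $i\in I$. *)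

theory Defs
  imports "HOL-Library.FuncSet"
begin

datatype 'a form =
    Atom 'a
  | FFalse
  | FTrue
  | Neg "'a form"
  | Conj "'a form" "'a form"
  | Disj "'a form" "'a form"
  | Impl "'a form" "'a form"

fun atoms :: "'a form \<Rightarrow> 'a set" where
  "atoms (Atom a) = {a}"
| "atoms FFalse = {}"
| "atoms FTrue = {}"
| "atoms (Neg p) = atoms p"
| "atoms (Conj p q) = atoms p \<union> atoms q"
| "atoms (Disj p q) = atoms p \<union> atoms q"
| "atoms (Impl p q) = atoms p \<union> atoms q"

fun eval :: "'a set \<Rightarrow> 'a form \<Rightarrow> bool" where
  "eval I (Atom a) = (a \<in> I)"
| "eval I FFalse = False"
| "eval I FTrue = True"
| "eval I (Neg p) = (\<not> eval I p)"
| "eval I (Conj p q) = (eval I p \<and> eval I q)"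
| "eval I (Disj p q) = (eval I p \<or> eval I q)"
| "eval I (Impl p q) = (eval I p \<longrightarrow> eval I q)"

definition forms_over :: "'a set \<Rightarrow> 'a form set" where
  "forms_over Sp = {p. atoms p \<subseteq> Sp}"

definition entails :: "'a set \<Rightarrow> 'a form \<Rightarrow> 'a form \<Rightarrow> bool" where
  "entails Sp p q \<longleftrightarrow> (\<forall>I. I \<subseteq> Sp \<longrightarrow> eval I p \<longrightarrow> eval I q)"

definition lequiv :: "'a set \<Rightarrow> 'a form \<Rightarrow> 'a form \<Rightarrow> bool" where
  "lequiv Sp p q \<longleftrightarrow> entails Sp p q \<and> entails Sp q p"

definition cls :: "'a set \<Rightarrow> 'a form \<Rightarrow> 'a form set" where
  "cls Sp p = {q \<in> forms_over Sp. lequiv Sp p q}"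

definition Lp :: "'a set \<Rightarrow> 'a form set set" where
  "Lp Sp = cls Sp ` forms_over Sp"

definition leq_p :: "'a set \<Rightarrow> 'a form set \<Rightarrow> 'a form set \<Rightarrow> bool" where
  "leq_p Sp X Y \<longleftrightarrow>
     (\<exists>p q. p \<in> forms_over Sp \<and> q \<in> forms_over Sp \<and> X = cls Sp p \<and> Y = cls Sp q
            \<and> entails Sp p q)"

definition Ldp :: "'a set \<Rightarrow> 'a set \<Rightarrow> ('a \<Rightarrow> 'a form set) set" where
  "Ldp Sp Sd = Sd \<rightarrow>\<^sub>E Lp Sp"

definition leq_dp :: "'a set \<Rightarrow> 'a set \<Rightarrow> ('a \<Rightarrow> 'a form set) \<Rightarrow> ('a \<Rightarrow> 'a form set) \<Rightarrow> bool" where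
  "leq_dp Sp Sd A B \<longleftrightarrow> (\<forall>a\<in>Sd. leq_p Sp (A a) (B a))"

definition proj :: "'a set \<Rightarrow> 'a set \<Rightarrow> 'a set \<Rightarrow> ('a \<Rightarrow> 'a form set) \<Rightarrow> 'a set" where
  "proj Sp Sd I A =
     {a \<in> Sd. eval I (SOME psi. psi \<in> forms_over Sp \<and> A a = cls Sp psi)}"

definition is_lub_on :: "'b set \<Rightarrow> ('b \<Rightarrow> 'b \<Rightarrow> bool) \<Rightarrow> 'b set \<Rightarrow> 'b \<Rightarrow> bool" where
  "is_lub_on C le X s \<longleftrightarrow> s \<in> C \<and> (\<forall>x\<in>X. le x s) \<and> (\<forall>u\<in>C. (\<forall>x\<in>X. le x u) \<longrightarrow> le s u)"

definition is_glb_on :: "'b set \<Rightarrow> ('b \<Rightarrow> 'b \<Rightarrow> bool) \<Rightarrow> 'b set \<Rightarrow> 'b \<Rightarrow> bool" where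
  "is_glb_on C le X s \<longleftrightarrow> s \<in> C \<and> (\<forall>x\<in>X. le s x) \<and> (\<forall>u\<in>C. (\<forall>x\<in>X. le u x) \<longrightarrow> le u s)"

definition partial_order_on_carrier :: "'b set \<Rightarrow> ('b \<Rightarrow> 'b \<Rightarrow> bool) \<Rightarrow> bool" where
  "partial_order_on_carrier C le \<longleftrightarrow>
     (\<forall>x\<in>C. le x x) \<and>
     (\<forall>x\<in>C. \<forall>y\<in>C. le x y \<and> le y x \<longrightarrow> x = y) \<and>
     (\<forall>x\<in>C. \<forall>y\<in>C. \<forall>z\<in>C. le x y \<and> le y z \<longrightarrow> le x z)"

definition complete_lattice_on :: "'b set \<Rightarrow> ('b \<Rightarrow> 'b \<Rightarrow> bool) \<Rightarrow> bool" where
  "complete_lattice_on C le \<longleftrightarrow> partial_order_on_carrier C le \<and>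
     (\<forall>X\<subseteq>C. (\<exists>s. is_lub_on C le X s) \<and> (\<exists>s. is_glb_on C le X s))"

definition complete_lattice_morphism ::
  "'b set \<Rightarrow> ('b \<Rightarrow> 'b \<Rightarrow> bool) \<Rightarrow> 'c set \<Rightarrow> ('c \<Rightarrow> 'c \<Rightarrow> bool) \<Rightarrow> ('b \<Rightarrow> 'c) \<Rightarrow> bool" where
  "complete_lattice_morphism C le K le' f \<longleftrightarrow>
     f ` C \<subseteq> K \<and>
     (\<forall>X\<subseteq>C. \<forall>s. is_lub_on C le X s \<longrightarrow> is_lub_on K le' (f ` X) (f s)) \<and>
     (\<forall>X\<subseteq>C. \<forall>s. is_glb_on C le X s \<longrightarrow> is_glb_on K le' (f ` X) (f s))"

definition parametrisation ::
  "'b set \<Rightarrow> ('b \<Rightarrow> 'b \<Rightarrow> bool) \<Rightarrow> 'c set \<Rightarrow> ('c \<Rightarrow> 'c \<Rightarrow> bool) \<Rightarrow> 'i set \<Rightarrow> ('i \<Rightarrow> 'b \<Rightarrow> 'c) \<Rightarrow> bool" where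
  "parametrisation C le K le' J f \<longleftrightarrow>
     complete_lattice_on C le \<and> complete_lattice_on K le' \<and>
     (\<forall>i\<in>J. complete_lattice_morphism C le K le' (f i) \<and> f i ` C = K) \<and>
     (\<forall>x\<in>C. \<forall>y\<in>C. le x y \<longleftrightarrow> (\<forall>i\<in>J. le' (f i x) (f i y)))"

end

theory Submission
  imports Defs
begin

text \<open>Identify a class of formulas with its set of models, which is a bijection between \<open>L_p\<close>
  and \<open>2^(2^\<Sigma>\<^sub>p)\<close> since \<open>\<Sigma>\<^sub>p\<close> is finite and every set of interpretations is defined by its
  disjunctive normal form. Then \<open>L^d_p\<close> is order isomorphic to the powerset of \<open>2^\<Sigma>\<^sub>p \<times> \<Sigma>\<^sub>d\<close>,
  the pair \<open>(I, a)\<close> standing for "\<open>I\<close> satisfies \<open>\<A>(a)\<close>", and \<open>\<pi>\<^sub>I\<close> becomes the slice of a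
  relation at \<open>I\<close>. Slicing preserves unions and intersections and the slices determine the relation,
  so the powerset of a product is a parametrisation of the powerset of its second factor, and this
  property transfers along order isomorphisms.\<close>

section \<open>Transport along order isomorphisms\<close>

locale order_iso =
  fixes h :: "'b \<Rightarrow> 'c" and C :: "'b set" and le :: "'b \<Rightarrow> 'b \<Rightarrow> bool"
    and D :: "'c set" and le' :: "'c \<Rightarrow> 'c \<Rightarrow> bool"
  assumes bij: "bij_betw h C D"
    and le_iff: "\<And>x y. x \<in> C \<Longrightarrow> y \<in> C \<Longrightarrow> le x y \<longleftrightarrow> le' (h x) (h y)"
begin

lemma image_eq: "h ` C = D"
  using bij by (simp add: bij_betw_def)

lemma ball_D_iff: "(\<forall>u\<in>D. P u) \<longleftrightarrow> (\<forall>u\<in>C. P (h u))"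
  using image_eq by blast

lemma is_lub_on_iff:
  assumes "X \<subseteq> C" "s \<in> C"
  shows "is_lub_on C le X s \<longleftrightarrow> is_lub_on D le' (h ` X) (h s)"
proof -
  have "\<And>u. u \<in> C \<Longrightarrow> (\<forall>x\<in>X. le x u) \<longleftrightarrow> (\<forall>x\<in>X. le' (h x) (h u))"
    using assms le_iff by blast
  then show ?thesis
    using assms le_iff image_eq unfolding is_lub_on_def ball_D_iff by auto
qed

lemma is_glb_on_iff:
  assumes "X \<subseteq> C" "s \<in> C"
  shows "is_glb_on C le X s \<longleftrightarrow> is_glb_on D le' (h ` X) (h s)"
proof -
  have "\<And>u. u \<in> C \<Longrightarrow> (\<forall>x\<in>X. le u x) \<longleftrightarrow> (\<forall>x\<in>X. le' (h u) (h x))"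
    using assms le_iff by blast
  then show ?thesis
    using assms le_iff image_eq unfolding is_glb_on_def ball_D_iff by auto
qed

lemma partial_order_on_carrier:
  assumes "partial_order_on_carrier D le'"
  shows "partial_order_on_carrier C le"
proof -
  from assms have refl: "\<And>u. u \<in> D \<Longrightarrow> le' u u"
    and antisym: "\<And>u v. u \<in> D \<Longrightarrow> v \<in> D \<Longrightarrow> le' u v \<Longrightarrow> le' v u \<Longrightarrow> u = v"
    and trans: "\<And>u v w. u \<in> D \<Longrightarrow> v \<in> D \<Longrightarrow> w \<in> D \<Longrightarrow> le' u v \<Longrightarrow> le' v w \<Longrightarrow> le' u w"
    unfolding partial_order_on_carrier_def by blast+
  have hD: "h x \<in> D" if "x \<in> C" for x using that image_eq by blast
  have inj: "x = y" if "x \<in> C" "y \<in> C" "h x = h y" for x y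
    using bij that by (auto simp: bij_betw_def dest: inj_onD)
  show ?thesis
    unfolding partial_order_on_carrier_def
  proof (intro conjI ballI impI)
    fix x y z assume xyz: "x \<in> C" "y \<in> C" "z \<in> C"
    show "le x x" using refl[OF hD] le_iff xyz by blast
    show "x = y" if "le x y \<and> le y x"
      using that antisym[OF hD hD] le_iff inj xyz by blast
    show "le x z" if "le x y \<and> le y z"
      using that trans[OF hD hD hD] le_iff xyz by blast
  qed
qed

lemma complete_lattice_on:
  assumes "complete_lattice_on D le'"
  shows "complete_lattice_on C le"
  unfolding complete_lattice_on_def
proof (intro conjI allI impI)
  show "partial_order_on_carrier C le"
    using assms partial_order_on_carrier by (simp add: complete_lattice_on_def)
  fix X assume X: "X \<subseteq> C"
  then have hX: "h ` X \<subseteq> D" using image_eq by blast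
  obtain t where t: "is_lub_on D le' (h ` X) t"
    using assms hX by (auto simp: complete_lattice_on_def)
  then obtain s where "s \<in> C" "t = h s"
    using image_eq unfolding is_lub_on_def by blast
  with t have "is_lub_on C le X s"
    using is_lub_on_iff[OF X \<open>s \<in> C\<close>] by simp
  then show "\<exists>s. is_lub_on C le X s" ..
  obtain t where t: "is_glb_on D le' (h ` X) t"
    using assms hX by (auto simp: complete_lattice_on_def)
  then obtain s where "s \<in> C" "t = h s"
    using image_eq unfolding is_glb_on_def by blast
  with t have "is_glb_on C le X s"
    using is_glb_on_iff[OF X \<open>s \<in> C\<close>] by simp
  then show "\<exists>s. is_glb_on C le X s" ..
qed

lemma complete_lattice_morphism:
  assumes g: "complete_lattice_morphism D le' K le'' g" and f: "\<And>x. x \<in> C \<Longrightarrow> f x = g (h x)"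
  shows "complete_lattice_morphism C le K le'' f"
  unfolding complete_lattice_morphism_def
proof (intro conjI allI impI)
  have fX: "f ` X = g ` h ` X" if "X \<subseteq> C" for X
    using that f by (force simp: image_image)
  show "f ` C \<subseteq> K" using g fX[of C] image_eq by (simp add: complete_lattice_morphism_def)
  fix X s assume X: "X \<subseteq> C"
  have hX: "h ` X \<subseteq> D" using X image_eq by blast
  show "is_lub_on K le'' (f ` X) (f s)" if "is_lub_on C le X s"
  proof -
    have "s \<in> C" using that by (simp add: is_lub_on_def)
    then show ?thesis
      using that g hX f fX[OF X] is_lub_on_iff[OF X] by (simp add: complete_lattice_morphism_def)
  qed
  show "is_glb_on K le'' (f ` X) (f s)" if "is_glb_on C le X s"
  proof -
    have "s \<in> C" using that by (simp add: is_glb_on_def)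
    then show ?thesis
      using that g hX f fX[OF X] is_glb_on_iff[OF X] by (simp add: complete_lattice_morphism_def)
  qed
qed

lemma parametrisation:
  assumes par: "parametrisation D le' K le'' J g"
    and f: "\<And>i x. i \<in> J \<Longrightarrow> x \<in> C \<Longrightarrow> f i x = g i (h x)"
  shows "parametrisation C le K le'' J f"
  unfolding parametrisation_def
proof (intro conjI ballI)
  show "complete_lattice_on C le" "complete_lattice_on K le''"
    using par complete_lattice_on by (auto simp: parametrisation_def)
  fix i assume i: "i \<in> J"
  show "complete_lattice_morphism C le K le'' (f i)"
    using par i f by (auto simp: parametrisation_def intro: complete_lattice_morphism)
  have "f i ` C = g i ` h ` C"
    using i f by (force simp: image_image)
  then show "f i ` C = K"
    using par i image_eq by (simp add: parametrisation_def)
next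
  fix x y assume xy: "x \<in> C" "y \<in> C"
  then have "h x \<in> D" "h y \<in> D" using image_eq by blast+
  then have "le' (h x) (h y) \<longleftrightarrow> (\<forall>i\<in>J. le'' (g i (h x)) (g i (h y)))"
    using par by (simp add: parametrisation_def)
  then show "le x y \<longleftrightarrow> (\<forall>i\<in>J. le'' (f i x) (f i y))"
    using xy le_iff f by simp
qed

end

section \<open>Powersets of products\<close>

lemma is_lub_on_Pow: "X \<subseteq> Pow U \<Longrightarrow> is_lub_on (Pow U) (\<subseteq>) X s \<longleftrightarrow> s = \<Union>X"
  unfolding is_lub_on_def by blast

lemma is_glb_on_Pow: "is_glb_on (Pow U) (\<subseteq>) X s \<longleftrightarrow> s = U \<inter> \<Inter>X"
proof
  assume glb: "is_glb_on (Pow U) (\<subseteq>) X s"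
  then have "s \<subseteq> U \<inter> \<Inter>X" by (auto simp: is_glb_on_def)
  moreover have "U \<inter> \<Inter>X \<subseteq> s"
    using glb unfolding is_glb_on_def by (metis Int_lower1 Inter_lower le_infI2 PowI)
  ultimately show "s = U \<inter> \<Inter>X" by (rule subset_antisym)
qed (auto simp: is_glb_on_def)

lemma complete_lattice_on_Pow: "complete_lattice_on (Pow U) (\<subseteq>)"
  unfolding complete_lattice_on_def partial_order_on_carrier_def
  by (auto simp: is_lub_on_Pow is_glb_on_Pow)

lemma Image_Union_singleton: "(\<Union>X) `` {i} = \<Union>((\<lambda>R. R `` {i}) ` X)"
  by blast

lemma Image_Int_Inter_singleton:
  "i \<in> J \<Longrightarrow> ((J \<times> K) \<inter> \<Inter>X) `` {i} = K \<inter> \<Inter>((\<lambda>R. R `` {i}) ` X)"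
  by blast

lemma subset_iff_Image_singleton:
  "R \<subseteq> J \<times> K \<Longrightarrow> R \<subseteq> R' \<longleftrightarrow> (\<forall>i\<in>J. R `` {i} \<subseteq> R' `` {i})"
  by blast

lemma parametrisation_Pow_Image:
  "parametrisation (Pow (J \<times> K)) (\<subseteq>) (Pow K) (\<subseteq>) J (\<lambda>i R. R `` {i})"
  unfolding parametrisation_def complete_lattice_morphism_def
proof (intro conjI ballI allI impI)
  fix i assume i: "i \<in> J"
  show "(\<lambda>R. R `` {i}) ` Pow (J \<times> K) = Pow K"
  proof
    show "Pow K \<subseteq> (\<lambda>R. R `` {i}) ` Pow (J \<times> K)"
    proof
      fix S assume "S \<in> Pow K"
      then have "(J \<times> S) `` {i} = S" "J \<times> S \<in> Pow (J \<times> K)" using i by auto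
      then show "S \<in> (\<lambda>R. R `` {i}) ` Pow (J \<times> K)" by (metis imageI)
    qed
  qed blast
  then show "(\<lambda>R. R `` {i}) ` Pow (J \<times> K) \<subseteq> Pow K" by simp
  fix X s assume X: "X \<subseteq> Pow (J \<times> K)"
  have slices: "(\<lambda>R. R `` {i}) ` X \<subseteq> Pow K" using X by blast
  show "is_lub_on (Pow (J \<times> K)) (\<subseteq>) X s \<Longrightarrow>
        is_lub_on (Pow K) (\<subseteq>) ((\<lambda>R. R `` {i}) ` X) (s `` {i})"
    using X slices by (simp add: is_lub_on_Pow Image_Union_singleton)
  show "is_glb_on (Pow (J \<times> K)) (\<subseteq>) X s \<Longrightarrow>
        is_glb_on (Pow K) (\<subseteq>) ((\<lambda>R. R `` {i}) ` X) (s `` {i})"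
    using i by (simp add: is_glb_on_Pow Image_Int_Inter_singleton)
qed (auto simp: complete_lattice_on_Pow subset_iff_Image_singleton)

definition membership_graph :: "'d set \<Rightarrow> ('l \<Rightarrow> 'v set) \<Rightarrow> ('d \<Rightarrow> 'l) \<Rightarrow> ('v \<times> 'd) set" where
  "membership_graph D m A = {(v, a). a \<in> D \<and> v \<in> m (A a)}"

lemma membership_graph_Image: "membership_graph D m A `` {v} = {a \<in> D. v \<in> m (A a)}"
  unfolding membership_graph_def by blast

lemma membership_graph_subset_iff:
  "membership_graph D m A \<subseteq> membership_graph D m B \<longleftrightarrow> (\<forall>a\<in>D. m (A a) \<subseteq> m (B a))"
  unfolding membership_graph_def by blast

lemma bij_betw_membership_graph:
  assumes m: "bij_betw m L (Pow V)"
  shows "bij_betw (membership_graph D m) (D \<rightarrow>\<^sub>E L) (Pow (V \<times> D))"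
proof (rule bij_betw_imageI)
  show "inj_on (membership_graph D m) (D \<rightarrow>\<^sub>E L)"
  proof (rule inj_onI)
    fix A B assume A: "A \<in> D \<rightarrow>\<^sub>E L" and B: "B \<in> D \<rightarrow>\<^sub>E L"
      and eq: "membership_graph D m A = membership_graph D m B"
    have "A a = B a" if "a \<in> D" for a
    proof -
      have "m (A a) = m (B a)" using eq that membership_graph_subset_iff by (metis subset_antisym order_refl)
      then show ?thesis using m A B that by (auto simp: bij_betw_def dest: inj_onD)
    qed
    then show "A = B" using A B by (metis PiE_ext)
  qed
  have "membership_graph D m A \<subseteq> V \<times> D" if "A \<in> D \<rightarrow>\<^sub>E L" for A
    using that m unfolding membership_graph_def bij_betw_def by fastforce
  moreover have "R \<in> membership_graph D m ` (D \<rightarrow>\<^sub>E L)" if R: "R \<subseteq> V \<times> D" for R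
  proof -
    define A where "A = (\<lambda>a\<in>D. inv_into L m {v. (v, a) \<in> R})"
    have "{v. (v, a) \<in> R} \<in> m ` L" for a
      using R m by (auto simp: bij_betw_def)
    then have "A \<in> D \<rightarrow>\<^sub>E L" and "a \<in> D \<Longrightarrow> m (A a) = {v. (v, a) \<in> R}" for a
      by (auto simp: A_def inv_into_into f_inv_into_f)
    moreover have "membership_graph D m A = R"
      using R calculation(2) unfolding membership_graph_def by auto
    ultimately show ?thesis by blast
  qed
  ultimately show "membership_graph D m ` (D \<rightarrow>\<^sub>E L) = Pow (V \<times> D)" by blast
qed

section \<open>Classes of formulas as sets of models\<close>

definition models :: "'a set \<Rightarrow> 'a form \<Rightarrow> 'a set set" where
  "models Sp p = {I. I \<subseteq> Sp \<and> eval I p}"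

definition class_models :: "'a set \<Rightarrow> 'a form set \<Rightarrow> 'a set set" where
  "class_models Sp X = {I. I \<subseteq> Sp \<and> (\<exists>p\<in>X. eval I p)}"

lemma class_models_cls: "p \<in> forms_over Sp \<Longrightarrow> class_models Sp (cls Sp p) = models Sp p"
  unfolding class_models_def cls_def models_def lequiv_def entails_def by blast

lemma lequiv_iff_models_eq: "lequiv Sp p q \<longleftrightarrow> models Sp p = models Sp q"
  unfolding lequiv_def entails_def models_def by auto

lemma entails_iff_models_subset: "entails Sp p q \<longleftrightarrow> models Sp p \<subseteq> models Sp q"
  unfolding entails_def models_def by auto

lemma cls_eq_if_models_eq: "models Sp p = models Sp q \<Longrightarrow> cls Sp p = cls Sp q"
  unfolding cls_def by (simp add: lequiv_iff_models_eq)

definition char_form :: "'a list \<Rightarrow> 'a set \<Rightarrow> 'a form" where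
  "char_form xs I = foldr (\<lambda>a p. Conj (if a \<in> I then Atom a else Neg (Atom a)) p) xs FTrue"

definition Disjs :: "'a form list \<Rightarrow> 'a form" where
  "Disjs ps = foldr Disj ps FFalse"

lemma eval_char_form: "eval J (char_form xs I) \<longleftrightarrow> (\<forall>a\<in>set xs. a \<in> J \<longleftrightarrow> a \<in> I)"
  unfolding char_form_def by (induction xs) auto

lemma atoms_char_form: "atoms (char_form xs I) \<subseteq> set xs"
  unfolding char_form_def by (induction xs) auto

lemma eval_Disjs: "eval J (Disjs ps) \<longleftrightarrow> (\<exists>p\<in>set ps. eval J p)"
  unfolding Disjs_def by (induction ps) auto

lemma atoms_Disjs: "atoms (Disjs ps) = \<Union>(atoms ` set ps)"
  unfolding Disjs_def by (induction ps) auto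

lemma definable:
  assumes "finite Sp" "M \<subseteq> Pow Sp"
  shows "\<exists>p\<in>forms_over Sp. models Sp p = M"
proof -
  obtain xs where xs: "set xs = Sp" using finite_list[OF assms(1)] by blast
  have "finite M" using assms finite_Pow_iff finite_subset by metis
  then obtain ms where ms: "set ms = M" using finite_list by blast
  define p where "p = Disjs (map (char_form xs) ms)"
  have "atoms p \<subseteq> Sp"
    using atoms_char_form xs by (fastforce simp: p_def atoms_Disjs)
  moreover have "models Sp p = M"
  proof (intro set_eqI iffI)
    fix J assume "J \<in> models Sp p"
    then obtain I where "I \<in> M" "J \<subseteq> Sp" "\<forall>a\<in>Sp. a \<in> J \<longleftrightarrow> a \<in> I"
      by (auto simp: models_def p_def eval_Disjs eval_char_form xs ms)
    moreover have "I \<subseteq> Sp" using \<open>I \<in> M\<close> assms(2) by blast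
    ultimately show "J \<in> M" by (metis subset_antisym subsetI subsetD)
  next
    fix J assume "J \<in> M"
    then show "J \<in> models Sp p"
      using assms(2) by (auto simp: models_def p_def eval_Disjs eval_char_form xs ms)
  qed
  ultimately show ?thesis unfolding forms_over_def by blast
qed

lemma bij_betw_class_models:
  assumes "finite Sp"
  shows "bij_betw (class_models Sp) (Lp Sp) (Pow (Pow Sp))"
proof (rule bij_betw_imageI)
  show "inj_on (class_models Sp) (Lp Sp)"
  proof (rule inj_onI)
    fix X Y assume "X \<in> Lp Sp" "Y \<in> Lp Sp" and eq: "class_models Sp X = class_models Sp Y"
    then obtain p q where "p \<in> forms_over Sp" "q \<in> forms_over Sp" "X = cls Sp p" "Y = cls Sp q"
      by (auto simp: Lp_def)
    moreover from eq calculation have "models Sp p = models Sp q"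
      by (simp add: class_models_cls)
    ultimately show "X = Y" using cls_eq_if_models_eq by blast
  qed
  have "class_models Sp ` Lp Sp = models Sp ` forms_over Sp"
    by (auto simp: Lp_def image_image class_models_cls)
  also have "\<dots> = Pow (Pow Sp)"
  proof
    show "Pow (Pow Sp) \<subseteq> models Sp ` forms_over Sp"
    proof
      fix M assume "M \<in> Pow (Pow Sp)"
      then obtain p where "p \<in> forms_over Sp" "models Sp p = M"
        using definable[OF assms] by blast
      then show "M \<in> models Sp ` forms_over Sp" by blast
    qed
  qed (auto simp: models_def)
  finally show "class_models Sp ` Lp Sp = Pow (Pow Sp)" .
qed

lemma leq_p_iff:
  assumes "X \<in> Lp Sp" "Y \<in> Lp Sp"
  shows "leq_p Sp X Y \<longleftrightarrow> class_models Sp X \<subseteq> class_models Sp Y"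
proof
  assume "leq_p Sp X Y"
  then obtain p q where "p \<in> forms_over Sp" "q \<in> forms_over Sp" "X = cls Sp p" "Y = cls Sp q"
    and "entails Sp p q" unfolding leq_p_def by blast
  then show "class_models Sp X \<subseteq> class_models Sp Y"
    by (simp add: class_models_cls entails_iff_models_subset)
next
  assume sub: "class_models Sp X \<subseteq> class_models Sp Y"
  obtain p q where "p \<in> forms_over Sp" "q \<in> forms_over Sp" "X = cls Sp p" "Y = cls Sp q"
    using assms by (auto simp: Lp_def)
  moreover from sub calculation have "entails Sp p q"
    by (simp add: class_models_cls entails_iff_models_subset)
  ultimately show "leq_p Sp X Y" unfolding leq_p_def by blast
qed

lemma proj_eq:
  assumes A: "A \<in> Ldp Sp Sd" and I: "I \<subseteq> Sp"
  shows "proj Sp Sd I A = {a \<in> Sd. I \<in> class_models Sp (A a)}"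
proof -
  have "eval I (SOME p. p \<in> forms_over Sp \<and> A a = cls Sp p) \<longleftrightarrow> I \<in> class_models Sp (A a)"
    if a: "a \<in> Sd" for a
  proof -
    have "\<exists>p. p \<in> forms_over Sp \<and> A a = cls Sp p"
      using A a by (auto simp: Ldp_def Lp_def)
    then have "(SOME p. p \<in> forms_over Sp \<and> A a = cls Sp p) \<in> forms_over Sp \<and>
        A a = cls Sp (SOME p. p \<in> forms_over Sp \<and> A a = cls Sp p)"
      by (rule someI_ex)
    then have "class_models Sp (A a) = models Sp (SOME p. p \<in> forms_over Sp \<and> A a = cls Sp p)"
      using class_models_cls by metis
    then show ?thesis using I by (simp add: models_def)
  qed
  then show ?thesis unfolding proj_def by auto
qed

theorem proposition4p6:
  fixes Sp Sd :: "'a set"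
  assumes "finite Sp" and "finite Sd" and "Sp \<inter> Sd = {}"
  shows "parametrisation (Ldp Sp Sd) (leq_dp Sp Sd) (Pow Sd) (\<subseteq>)
           (Pow Sp) (\<lambda>I. proj Sp Sd I)"
proof -
  let ?h = "membership_graph Sd (class_models Sp)"
  have "order_iso ?h (Ldp Sp Sd) (leq_dp Sp Sd) (Pow (Pow Sp \<times> Sd)) (\<subseteq>)"
  proof
    show "bij_betw ?h (Ldp Sp Sd) (Pow (Pow Sp \<times> Sd))"
      unfolding Ldp_def by (rule bij_betw_membership_graph[OF bij_betw_class_models[OF assms(1)]])
    fix A B assume "A \<in> Ldp Sp Sd" "B \<in> Ldp Sp Sd"
    then have "leq_p Sp (A a) (B a) \<longleftrightarrow> class_models Sp (A a) \<subseteq> class_models Sp (B a)"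
      if "a \<in> Sd" for a
      using that by (intro leq_p_iff) (auto simp: Ldp_def)
    then show "leq_dp Sp Sd A B \<longleftrightarrow> ?h A \<subseteq> ?h B"
      by (simp add: leq_dp_def membership_graph_subset_iff)
  qed
  then show ?thesis
    by (rule order_iso.parametrisation[OF _ parametrisation_Pow_Image])
       (simp add: proj_eq membership_graph_Image)
qed

end
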